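(* Let $n \ge m \ge r \ge 2$ be integers, $\delta\in[0,1/m]$ a real number, and $F$ an $m$-vertex $r$-graph. Suppose $t$ is a positive integer with $$t \le \min\left\{\frac{\delta m n}{r-1} - r,\ \frac{n}{m}\right\}.$$ Then every $n$-vertex $r$-graph $\mathcal{H}$ that does not contain $t+1$ pairwise vertex-disjoint copies of $F$ and satisfies $\Delta(\mathcal{H}) \le (1/m - \delta)\binom{n-1}{r-1}$ has $$|\mathcal{H}| \le \binom{n}{r} - \binom{n-t}{r} + \mathrm{ex}(n-t,F).$$
   Context: An $r$-graph is a set of $r$-element subsets (edges) of a finite vertex set; $|\mathcal{H}|$ is its number of edges and $\Delta(\mathcal{H})$ its maximum degree. $\mathrm{ex}(n,F)$ is the maximum number of edges in an $n$-vertex $r$-graph with no copy of $F$. *)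

theory Defs
  imports Complex_Main
begin

definition rgraph :: "nat \<Rightarrow> 'a set \<Rightarrow> 'a set set \<Rightarrow> bool" where
  "rgraph r V H \<longleftrightarrow> finite V \<and> (\<forall>e\<in>H. e \<subseteq> V \<and> card e = r)"

definition degree :: "'a set set \<Rightarrow> 'a \<Rightarrow> nat" where
  "degree H v = card {e \<in> H. v \<in> e}"

definition is_copy :: "'b set \<Rightarrow> 'b set set \<Rightarrow> 'a set \<Rightarrow> 'a set set \<Rightarrow> ('b \<Rightarrow> 'a) \<Rightarrow> bool" where
  "is_copy VF F V H \<phi> \<longleftrightarrow> inj_on \<phi> VF \<and> \<phi> ` VF \<subseteq> V \<and> (\<forall>e\<in>F. \<phi> ` e \<in> H)"

definition contains :: "'b set \<Rightarrow> 'b set set \<Rightarrow> 'a set \<Rightarrow> 'a set set \<Rightarrow> bool" where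
  "contains VF F V H \<longleftrightarrow> (\<exists>\<phi>. is_copy VF F V H \<phi>)"

definition has_disjoint_copies :: "nat \<Rightarrow> 'b set \<Rightarrow> 'b set set \<Rightarrow> 'a set \<Rightarrow> 'a set set \<Rightarrow> bool" where
  "has_disjoint_copies k VF F V H \<longleftrightarrow>
     (\<exists>\<phi> :: nat \<Rightarrow> 'b \<Rightarrow> 'a. (\<forall>i<k. is_copy VF F V H (\<phi> i)) \<and>
        (\<forall>i<k. \<forall>j<k. i \<noteq> j \<longrightarrow> \<phi> i ` VF \<inter> \<phi> j ` VF = {}))"

definition ex :: "nat \<Rightarrow> nat \<Rightarrow> 'b set \<Rightarrow> 'b set set \<Rightarrow> nat" where
  "ex r n VF F = Max {card H | H :: nat set set. rgraph r {0..<n} H \<and> \<not> contains VF F {0..<n} H}"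

end

theory Submission
  imports Defs
begin

text \<open>
  Fix a maximal family of \<open>s \<le> t\<close> vertex-disjoint copies of \<open>F\<close>, covering a set \<open>U\<close> of
  \<open>s m\<close> vertices; by maximality the edges inside \<open>V - U\<close> form an \<open>F\<close>-free graph.
  If \<open>s m \<le> t\<close>, restrict to \<open>n - t\<close> vertices of \<open>V - U\<close>: the edges meeting the other
  \<open>t\<close> vertices number at most \<open>C(n,r) - C(n-t,r)\<close>. If \<open>s m > t\<close>, pad \<open>V - U\<close> with
  vertices of \<open>U\<close> to \<open>n - t\<close> vertices; the edges meeting \<open>U\<close> number at most
  \<open>s m\<close> times the maximum degree, hence at most \<open>t (1 - \<delta> m) C(n-1,r-1)\<close>. When
  \<open>n < (t + 1) m\<close> there is no room to pad, but then double counting bounds all of \<open>H\<close>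
  by the same quantity. Finally, the bound on \<open>t\<close> makes \<open>C(n-t,r-1) \<ge> (1 - \<delta> m) C(n-1,r-1)\<close>,
  so \<open>t (1 - \<delta> m) C(n-1,r-1) \<le> C(n,r) - C(n-t,r)\<close>.
\<close>

lemma choose_eq_choose_diff_plus_sum:
  assumes "k \<le> N" and "0 < q"
  shows "N choose q = ((N - k) choose q) + (\<Sum>i<k. (N - 1 - i) choose (q - 1))"
  using assms(1)
proof (induction k)
  case 0
  then show ?case by simp
next
  case (Suc k)
  obtain q' where q: "q = Suc q'" using assms(2) by (cases q) auto
  have "N - k = Suc (N - Suc k)" using Suc.prems by simp
  then have "(N - k) choose q = ((N - Suc k) choose q') + ((N - Suc k) choose q)"
    unfolding q by (simp only: binomial_Suc_Suc)
  moreover have "N - 1 - k = N - Suc k" by simp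
  ultimately show ?case using Suc unfolding q by simp
qed

lemma choose_diff_bounds:
  assumes "k \<le> N" and "0 < q"
  shows choose_diff_ge: "k * ((N - k) choose (q - 1)) \<le> (N choose q) - ((N - k) choose q)"
    and choose_diff_le: "(N choose q) - ((N - k) choose q) \<le> k * ((N - 1) choose (q - 1))"
proof -
  have diff: "(N choose q) - ((N - k) choose q) = (\<Sum>i<k. (N - 1 - i) choose (q - 1))"
    using choose_eq_choose_diff_plus_sum[OF assms] by simp
  have "(\<Sum>i<k. (N - k) choose (q - 1)) \<le> (\<Sum>i<k. (N - 1 - i) choose (q - 1))"
    by (rule sum_mono, rule binomial_right_mono) simp
  then show "k * ((N - k) choose (q - 1)) \<le> (N choose q) - ((N - k) choose q)"
    unfolding diff by simp
  have "(\<Sum>i<k. (N - 1 - i) choose (q - 1)) \<le> (\<Sum>i<k. (N - 1) choose (q - 1))"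
    by (rule sum_mono, rule binomial_right_mono) simp
  then show "(N choose q) - ((N - k) choose q) \<le> k * ((N - 1) choose (q - 1))"
    unfolding diff by simp
qed

lemma choose_pred_lower_bound:
  fixes \<epsilon> :: real
  assumes "2 \<le> r" and "2 \<le> n" and "0 < t" and "t \<le> n"
    and "(real t - 1) * (real r - 1) \<le> \<epsilon> * (real n - 1)"
  shows "(1 - \<epsilon>) * real ((n - 1) choose (r - 1)) \<le> real ((n - t) choose (r - 1))"
proof -
  define D where "D = (n - 1) choose (r - 1)"
  define C where "C = (n - t) choose (r - 1)"
  define E where "E = (n - 2) choose (r - 2)"
  have "n - 1 - (t - 1) = n - t" and "n - 1 - 1 = n - 2" and "r - 1 - 1 = r - 2"
    using assms by auto
  then have "D - C \<le> (t - 1) * E"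
    unfolding D_def C_def E_def using choose_diff_le[of "t - 1" "n - 1" "r - 1"] assms by simp
  then have "real D \<le> real C + real (t - 1) * real E"
    by (simp flip: of_nat_mult of_nat_add)
  then have DCE: "real D \<le> real C + (real t - 1) * real E"
    using assms(3) by (simp add: of_nat_diff)
  have "(r - 1) * D = (n - 1) * E"
    unfolding D_def E_def using times_binomial_minus1_eq[of "r - 1" "n - 1"] assms(1)
    by (simp add: diff_diff_add numeral_2_eq_2)
  then have "real (r - 1) * real D = real (n - 1) * real E"
    by (simp only: of_nat_mult[symmetric])
  then have absorb: "(real r - 1) * real D = (real n - 1) * real E"
    using assms(1,2) by (simp add: of_nat_diff)
  have "(real n - 1) * ((real t - 1) * real E) = (real t - 1) * ((real r - 1) * real D)"
    by (simp only: absorb mult.left_commute)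
  also have "\<dots> \<le> (real n - 1) * (\<epsilon> * real D)"
    using mult_right_mono[OF assms(5), of "real D"] by (simp add: ac_simps)
  finally have "(real t - 1) * real E \<le> \<epsilon> * real D"
    using assms(2) by (simp add: mult_le_cancel_left)
  with DCE show ?thesis unfolding D_def[symmetric] C_def[symmetric] by (simp add: algebra_simps)
qed

lemma choose_diff_lower_bound:
  fixes \<epsilon> :: real
  assumes "2 \<le> r" and "2 \<le> n" and "0 < t" and "t \<le> n"
    and "(real t - 1) * (real r - 1) \<le> \<epsilon> * (real n - 1)"
  shows "real t * (1 - \<epsilon>) * real ((n - 1) choose (r - 1))
    \<le> real ((n choose r) - ((n - t) choose r))"
proof -
  have "real t * ((1 - \<epsilon>) * real ((n - 1) choose (r - 1))) \<le> real t * real ((n - t) choose (r - 1))"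
    using choose_pred_lower_bound[OF assms] by (rule mult_left_mono) simp
  also have "\<dots> \<le> real ((n choose r) - ((n - t) choose r))"
    using choose_diff_ge[of t n r] assms(1,4) by (simp flip: of_nat_mult)
  finally show ?thesis by (simp only: mult.assoc)
qed

lemma mult_diff_one_le_of_le_divide:
  fixes \<epsilon> :: real
  assumes "2 \<le> r" and "\<epsilon> \<le> 1" and "real t \<le> \<epsilon> * real n / real (r - 1) - real r"
  shows "(real t - 1) * (real r - 1) \<le> \<epsilon> * (real n - 1)"
proof -
  have "(real t + real r) * (real r - 1) \<le> \<epsilon> * real n"
    using assms(1,3) by (simp add: field_simps of_nat_diff)
  moreover have "1 \<le> (real r + 1) * (real r - 1)"
    using assms(1) mult_mono[of 1 "real r + 1" 1 "real r - 1"] by simp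
  ultimately have "(real t - 1) * (real r - 1) \<le> \<epsilon> * real n - 1"
    by (simp add: algebra_simps)
  then show ?thesis using assms(2) by (simp add: algebra_simps)
qed

definition induced :: "'a set set \<Rightarrow> 'a set \<Rightarrow> 'a set set" where
  "induced H A = {e \<in> H. e \<subseteq> A}"

lemma rgraph_induced:
  assumes "rgraph r V H" and "A \<subseteq> W" and "finite W"
  shows "rgraph r W (induced H A)"
  using assms unfolding rgraph_def induced_def by auto

lemma is_copy_mono:
  "is_copy VF F A G \<phi> \<Longrightarrow> A \<subseteq> B \<Longrightarrow> G \<subseteq> G' \<Longrightarrow> is_copy VF F B G' \<phi>"
  unfolding is_copy_def by blast

lemma contains_mono:
  "contains VF F A G \<Longrightarrow> A \<subseteq> B \<Longrightarrow> G \<subseteq> G' \<Longrightarrow> contains VF F B G'"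
  unfolding contains_def using is_copy_mono by blast

text \<open>Vertices of \<open>F\<close> lying in no edge can be re-embedded anywhere in \<open>A\<close>.\<close>
lemma contains_in_smaller_vertex_set:
  assumes "rgraph r VF F" and "card VF \<le> card A" and "A \<subseteq> B" and "finite B"
    and "\<forall>e\<in>G. e \<subseteq> A" and "contains VF F B G"
  shows "contains VF F A G"
proof -
  obtain \<phi> where \<phi>: "is_copy VF F B G \<phi>" using assms(6) unfolding contains_def by blast
  define N where "N = \<Union>F"
  have fVF: "finite VF" and NVF: "N \<subseteq> VF"
    using assms(1) unfolding rgraph_def N_def by auto
  have fN: "finite N" and fA: "finite A"
    using finite_subset NVF fVF assms(3,4) by auto
  have inj: "inj_on \<phi> N" using \<phi> NVF inj_on_subset unfolding is_copy_def by blast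
  have \<phi>N: "\<phi> ` N \<subseteq> A"
  proof
    fix y assume "y \<in> \<phi> ` N"
    then obtain e where "e \<in> F" "y \<in> \<phi> ` e" unfolding N_def by blast
    moreover from \<open>e \<in> F\<close> have "\<phi> ` e \<in> G" using \<phi> by (simp add: is_copy_def)
    ultimately show "y \<in> A" using assms(5) by blast
  qed
  have "card (VF - N) = card VF - card N" using NVF fN by (simp add: card_Diff_subset)
  also have "\<dots> \<le> card A - card (\<phi> ` N)" using assms(2) inj by (simp add: card_image)
  also have "\<dots> = card (A - \<phi> ` N)" using \<phi>N fN by (simp add: card_Diff_subset)
  finally obtain g where g: "g ` (VF - N) \<subseteq> A - \<phi> ` N" "inj_on g (VF - N)"
    using card_le_inj[of "VF - N" "A - \<phi> ` N"] fVF fA by auto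
  define \<psi> where "\<psi> x = (if x \<in> N then \<phi> x else g x)" for x
  have "inj_on \<psi> (N \<union> (VF - N))"
    unfolding \<psi>_def using inj_on_disjoint_Un[OF inj g(2)] g(1) by blast
  moreover have "N \<union> (VF - N) = VF" using NVF by blast
  moreover have "\<psi> ` VF \<subseteq> A" using \<phi>N g(1) unfolding \<psi>_def by auto
  moreover have "\<psi> ` e = \<phi> ` e" if "e \<in> F" for e
    using that unfolding \<psi>_def N_def by auto
  ultimately have "is_copy VF F A G \<psi>" using \<phi> unfolding is_copy_def by auto
  then show ?thesis unfolding contains_def by blast
qed

lemma contains_image:
  assumes "inj_on f W" and "\<forall>e\<in>G. e \<subseteq> W" and "contains VF F (f ` W) (image f ` G)"
  shows "contains VF F W G"
proof -
  obtain \<psi> where \<psi>: "is_copy VF F (f ` W) (image f ` G) \<psi>"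
    using assms(3) unfolding contains_def by blast
  define g where "g = inv_into W f"
  have "inj_on (g \<circ> \<psi>) VF"
    using \<psi> unfolding g_def is_copy_def by (metis comp_inj_on inj_on_inv_into inj_on_subset)
  moreover have "(g \<circ> \<psi>) ` VF \<subseteq> W"
  proof -
    have "\<psi> ` VF \<subseteq> f ` W" using \<psi> by (simp add: is_copy_def)
    moreover have "g ` f ` W \<subseteq> W" unfolding g_def by (auto intro: inv_into_into)
    ultimately show ?thesis by (auto simp: image_comp[symmetric])
  qed
  moreover have "(g \<circ> \<psi>) ` e \<in> G" if "e \<in> F" for e
  proof -
    have "\<psi> ` e \<in> image f ` G" using \<psi> that by (simp add: is_copy_def)
    then obtain e' where e': "e' \<in> G" "\<psi> ` e = f ` e'" by blast
    have "(g \<circ> \<psi>) ` e = g ` f ` e'" by (simp only: image_comp e'(2)[symmetric])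
    also have "\<dots> = e'"
      unfolding g_def using inv_into_image_cancel[OF assms(1)] assms(2) e'(1) by blast
    finally have "(g \<circ> \<psi>) ` e = e'" .
    with e' show ?thesis by simp
  qed
  ultimately show ?thesis unfolding contains_def is_copy_def by blast
qed

lemma card_le_ex_on_initial_segment:
  assumes "rgraph r {0..<N} G" and "\<not> contains VF F {0..<N} G"
  shows "card G \<le> ex r N VF F"
proof -
  let ?S = "{card H | H :: nat set set. rgraph r {0..<N} H \<and> \<not> contains VF F {0..<N} H}"
  have "?S \<subseteq> card ` Pow (Pow {0..<N})" unfolding rgraph_def by auto
  then have "finite ?S" by (rule finite_subset) simp
  moreover have "card G \<in> ?S" using assms by blast
  ultimately show ?thesis unfolding ex_def by simp
qed

lemma card_le_ex:
  assumes "rgraph r W G" and "card W = N" and "\<not> contains VF F W G"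
  shows "card G \<le> ex r N VF F"
proof -
  have fW: "finite W" and GW: "\<forall>e\<in>G. e \<subseteq> W \<and> card e = r"
    using assms(1) unfolding rgraph_def by auto
  obtain f where "bij_betw f W {0..<N}" using ex_bij_betw_finite_nat[OF fW] assms(2) by auto
  then have inj: "inj_on f W" and fW_eq: "f ` W = {0..<N}" by (auto simp: bij_betw_def)
  have "inj_on (image f) G"
    using GW inj by (auto simp: inj_on_def inj_on_image_eq_iff)
  then have "card (image f ` G) = card G" by (rule card_image)
  moreover have "rgraph r {0..<N} (image f ` G)"
    using GW inj fW_eq unfolding rgraph_def by (auto simp: card_image inj_on_subset)
  moreover have "\<not> contains VF F {0..<N} (image f ` G)"
    using contains_image[OF inj, of G] GW assms(3) fW_eq by auto
  ultimately show ?thesis using card_le_ex_on_initial_segment by metis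
qed

lemma sum_degree_eq:
  assumes "rgraph r V H"
  shows "(\<Sum>v\<in>V. degree H v) = r * card H"
proof -
  have fV: "finite V" and HV: "\<forall>e\<in>H. e \<subseteq> V \<and> card e = r"
    using assms unfolding rgraph_def by auto
  then have fH: "finite H" by (meson PowI finite_Pow_iff finite_subset subsetI)
  have "(\<Sum>v\<in>V. degree H v) = (\<Sum>v\<in>V. \<Sum>e\<in>H. if v \<in> e then 1 else 0)"
    unfolding degree_def using fH by (simp add: sum.inter_filter[symmetric])
  also have "\<dots> = (\<Sum>e\<in>H. \<Sum>v\<in>V. if v \<in> e then 1 else 0)" by (rule sum.swap)
  also have "\<dots> = (\<Sum>e\<in>H. card e)"
  proof (rule sum.cong)
    fix e assume "e \<in> H"
    then have "{v \<in> V. v \<in> e} = e" using HV by auto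
    then show "(\<Sum>v\<in>V. if v \<in> e then 1 else 0) = card e"
      using fV sum.inter_filter[of V "\<lambda>_. 1 :: nat" "\<lambda>v. v \<in> e"] by simp
  qed simp
  also have "\<dots> = r * card H" using HV by simp
  finally show ?thesis .
qed

lemma card_diff_induced_le_sum_degree:
  assumes "rgraph r V H"
  shows "card (H - induced H A) \<le> (\<Sum>v\<in>V - A. degree H v)"
proof -
  have fV: "finite V" and HV: "\<forall>e\<in>H. e \<subseteq> V"
    using assms unfolding rgraph_def by auto
  have "H - induced H A \<subseteq> (\<Union>v\<in>V - A. {e \<in> H. v \<in> e})"
    using HV unfolding induced_def by blast
  then have "card (H - induced H A) \<le> card (\<Union>v\<in>V - A. {e \<in> H. v \<in> e})"
    using fV HV by (intro card_mono) (auto intro: finite_subset[of _ "Pow V"])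
  also have "\<dots> \<le> (\<Sum>v\<in>V - A. degree H v)"
    unfolding degree_def using fV by (intro card_UN_le) simp
  finally show ?thesis .
qed

lemma card_diff_induced_le_choose:
  assumes "rgraph r V H" and "A \<subseteq> V"
  shows "card (H - induced H A) \<le> (card V choose r) - (card A choose r)"
proof -
  have fV: "finite V" and HV: "\<forall>e\<in>H. e \<subseteq> V \<and> card e = r"
    using assms unfolding rgraph_def by auto
  define RV where "RV = {e. e \<subseteq> V \<and> card e = r}"
  define RA where "RA = {e. e \<subseteq> A \<and> card e = r}"
  have fRV: "finite RV" unfolding RV_def using fV by (auto intro: finite_subset[of _ "Pow V"])
  have RA: "RA \<subseteq> RV" unfolding RA_def RV_def using assms(2) by blast
  have "H - induced H A \<subseteq> RV - RA" unfolding induced_def RV_def RA_def using HV by blast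
  then have "card (H - induced H A) \<le> card (RV - RA)" using fRV by (intro card_mono) auto
  also have "\<dots> = card RV - card RA"
    using RA fRV by (intro card_Diff_subset) (auto intro: finite_subset)
  also have "\<dots> = (card V choose r) - (card A choose r)"
    unfolding RV_def RA_def using fV assms(2) by (simp add: n_subsets finite_subset)
  finally show ?thesis .
qed

lemma card_le_card_induced_plus_card_diff:
  "card H \<le> card (induced H A) + card (H - induced H A)"
proof -
  have "H = induced H A \<union> (H - induced H A)" unfolding induced_def by blast
  then show ?thesis by (metis card_Un_le)
qed

lemma card_le_choose_diff_plus_ex:
  assumes "rgraph r V H" and "card V = n" and "A \<subseteq> V" and "N \<le> card A"
    and "\<not> contains VF F A (induced H A)"
  shows "card H \<le> (n choose r) - (N choose r) + ex r N VF F"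
proof -
  obtain W where W: "W \<subseteq> A" "card W = N" "finite W"
    using obtain_subset_with_card_n[OF assms(4)] by blast
  have "\<not> contains VF F W (induced H W)"
    using assms(5) contains_mono[of VF F W "induced H W" A "induced H A"] W(1)
    unfolding induced_def by blast
  then have "card (induced H W) \<le> ex r N VF F"
    using card_le_ex rgraph_induced[OF assms(1) subset_refl W(3)] W(2) by blast
  moreover have "card (H - induced H W) \<le> (n choose r) - (N choose r)"
    using card_diff_induced_le_choose[OF assms(1)] W assms(2,3) by fastforce
  ultimately show ?thesis using card_le_card_induced_plus_card_diff[of H W] by linarith
qed

lemma card_le_sum_degree_plus_ex:
  assumes "rgraph r V H" and "card V = n" and "A \<subseteq> V" and "card A \<le> N" and "N \<le> n"
    and "rgraph r' VF F" and "card VF \<le> card A" and "\<not> contains VF F A (induced H A)"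
  shows "card H \<le> (\<Sum>v\<in>V - A. degree H v) + ex r N VF F"
proof -
  have fV: "finite V" using assms(1) unfolding rgraph_def by blast
  have "N - card A \<le> card (V - A)" using assms(2-5) fV by (simp add: card_Diff_subset finite_subset)
  then obtain X where X: "X \<subseteq> V - A" "card X = N - card A" "finite X"
    by (rule obtain_subset_with_card_n)
  define W where "W = A \<union> X"
  have fW: "finite W" and AW: "A \<subseteq> W" unfolding W_def using fV assms(3) X(3) finite_subset by auto
  have "card W = N" unfolding W_def using X assms(3,4) fV
    by (subst card_Un_disjoint) (auto intro: finite_subset)
  moreover have "\<forall>e\<in>induced H A. e \<subseteq> A" unfolding induced_def by blast
  then have "\<not> contains VF F W (induced H A)"
    using contains_in_smaller_vertex_set[OF assms(6,7) AW fW] assms(8) by blast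
  ultimately have "card (induced H A) \<le> ex r N VF F"
    using card_le_ex rgraph_induced[OF assms(1) AW fW] by blast
  then show ?thesis
    using card_le_card_induced_plus_card_diff[of H A]
      card_diff_induced_le_sum_degree[OF assms(1), of A] by linarith
qed

lemma has_disjoint_copies_Suc:
  assumes "\<forall>i<s. is_copy VF F V H (\<phi> i)"
    and "\<forall>i<s. \<forall>j<s. i \<noteq> j \<longrightarrow> \<phi> i ` VF \<inter> \<phi> j ` VF = {}"
    and "is_copy VF F V H \<psi>" and "\<psi> ` VF \<inter> (\<Union>i<s. \<phi> i ` VF) = {}"
  shows "has_disjoint_copies (Suc s) VF F V H"
proof -
  let ?\<phi> = "\<phi>(s := \<psi>)"
  have "\<forall>i<Suc s. is_copy VF F V H (?\<phi> i)" using assms(1,3) by (simp add: less_Suc_eq)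
  moreover
  have "\<psi> ` VF \<inter> \<phi> i ` VF = {}" if "i < s" for i using assms(4) that by blast
  then have "\<forall>i<Suc s. \<forall>j<Suc s. i \<noteq> j \<longrightarrow> ?\<phi> i ` VF \<inter> ?\<phi> j ` VF = {}"
    using assms(2) by (simp add: less_Suc_eq Int_commute)
  ultimately show ?thesis unfolding has_disjoint_copies_def by blast
qed

lemma obtain_maximal_disjoint_copies:
  assumes "finite VF" and "card VF = m" and "\<not> has_disjoint_copies (t + 1) VF F V H"
  obtains s U where "s \<le> t" and "U \<subseteq> V" and "card U = s * m"
    and "\<not> contains VF F (V - U) (induced H (V - U))"
proof -
  define S where "S = {s. s \<le> t + 1 \<and> has_disjoint_copies s VF F V H}"
  define s where "s = Max S"
  have "finite S" unfolding S_def by simp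
  moreover have "0 \<in> S" unfolding S_def has_disjoint_copies_def by simp
  ultimately have "s \<in> S" and s_max: "\<And>s'. s' \<in> S \<Longrightarrow> s' \<le> s"
    unfolding s_def using Max_in Max_ge by blast+
  then have "s \<le> t" and "has_disjoint_copies s VF F V H"
    using assms(3) unfolding S_def by (auto simp: le_Suc_eq)
  then obtain \<phi> where copies: "\<forall>i<s. is_copy VF F V H (\<phi> i)"
    and disjoint: "\<forall>i<s. \<forall>j<s. i \<noteq> j \<longrightarrow> \<phi> i ` VF \<inter> \<phi> j ` VF = {}"
    unfolding has_disjoint_copies_def by blast
  define U where "U = (\<Union>i<s. \<phi> i ` VF)"
  have "U \<subseteq> V" using copies unfolding U_def is_copy_def by blast
  moreover have "card U = s * m"
  proof -
    have "card U = (\<Sum>i<s. card (\<phi> i ` VF))"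
      unfolding U_def using disjoint assms(1) by (intro card_UN_disjoint) auto
    also have "\<dots> = (\<Sum>i<s. m)"
      using copies assms(2) by (intro sum.cong) (auto simp: is_copy_def card_image)
    finally show ?thesis by simp
  qed
  moreover have "\<not> contains VF F (V - U) (induced H (V - U))"
  proof
    assume "contains VF F (V - U) (induced H (V - U))"
    then obtain \<psi> where \<psi>: "is_copy VF F (V - U) (induced H (V - U)) \<psi>"
      unfolding contains_def by blast
    then have "is_copy VF F V H \<psi>" by (rule is_copy_mono) (auto simp: induced_def)
    moreover have "\<psi> ` VF \<inter> U = {}" using \<psi> unfolding is_copy_def by blast
    ultimately have "has_disjoint_copies (Suc s) VF F V H"
      using has_disjoint_copies_Suc[OF copies disjoint] unfolding U_def by blast
    then have "Suc s \<in> S" using \<open>s \<le> t\<close> unfolding S_def by simp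
    then show False using s_max by fastforce
  qed
  ultimately show thesis using that \<open>s \<le> t\<close> by blast
qed

lemma card_le_of_few_vertices:
  fixes d :: real
  assumes "rgraph r V H" and "2 \<le> r" and "0 < t" and "card V \<le> (t + 1) * m"
    and "0 \<le> d" and "\<forall>v\<in>V. degree H v \<le> d"
  shows "real (card H) \<le> real t * real m * d"
proof -
  have "real r * real (card H) = (\<Sum>v\<in>V. real (degree H v))"
    using sum_degree_eq[OF assms(1)] by (metis of_nat_mult of_nat_sum)
  also have "\<dots> \<le> real (card V) * d" using sum_bounded_above[of V _ d] assms(6) by force
  also have "\<dots> \<le> (real t + 1) * real m * d"
  proof -
    have "real (card V) \<le> real ((t + 1) * m)" using assms(4) by (rule of_nat_mono)
    then show ?thesis using assms(5) by (intro mult_right_mono) (simp_all add: algebra_simps)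
  qed
  also have "\<dots> \<le> real r * (real t * real m * d)"
  proof -
    have "2 * t \<le> r * t" using assms(2) by (rule mult_le_mono1)
    then have "t + 1 \<le> r * t" using assms(3) by linarith
    then have "real t + 1 \<le> real r * real t"
      by (metis of_nat_1 of_nat_add of_nat_le_iff of_nat_mult)
    moreover have "0 \<le> real m * d" using assms(5) by simp
    ultimately have "(real t + 1) * (real m * d) \<le> (real r * real t) * (real m * d)"
      by (rule mult_right_mono)
    then show ?thesis by (simp only: mult.assoc)
  qed
  finally show ?thesis using assms(2) by simp
qed

lemma card_le_via_disjoint_copies:
  fixes d :: real
  assumes "rgraph r V H" and "card V = n" and "rgraph r' VF F" and "card VF = m"
    and "(t + 1) * m \<le> n" and "\<not> has_disjoint_copies (t + 1) VF F V H"
    and "0 \<le> d" and "\<forall>v\<in>V. degree H v \<le> d"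
    and "real t * real m * d \<le> real ((n choose r) - ((n - t) choose r))"
  shows "card H \<le> (n choose r) - ((n - t) choose r) + ex r (n - t) VF F"
proof -
  have "finite VF" and "finite V" using assms(1,3) unfolding rgraph_def by blast+
  obtain s U where "s \<le> t" and UV: "U \<subseteq> V" and "card U = s * m"
    and free: "\<not> contains VF F (V - U) (induced H (V - U))"
    using obtain_maximal_disjoint_copies[OF \<open>finite VF\<close> assms(4,6)] by blast
  have card_VU: "card (V - U) = n - s * m"
    using UV \<open>finite V\<close> \<open>card U = s * m\<close> assms(2) by (simp add: card_Diff_subset finite_subset)
  show ?thesis
  proof (cases "s * m \<le> t")
    case True
    then show ?thesis using card_le_choose_diff_plus_ex[OF assms(1,2) _ _ free] card_VU by simp
  next
    case False
    have "s * m + m \<le> (t + 1) * m" using \<open>s \<le> t\<close> by simp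
    then have "card VF \<le> card (V - U)" using assms(4,5) card_VU by linarith
    have "real (\<Sum>v\<in>U. degree H v) \<le> real (card U) * d"
      using sum_bounded_above[of U _ d] assms(8) UV by (simp add: subset_iff)
    also have "\<dots> \<le> real t * real m * d"
      using \<open>card U = s * m\<close> \<open>s \<le> t\<close> assms(7)
      by (intro mult_right_mono) (simp_all add: mult_right_mono)
    finally have "(\<Sum>v\<in>U. degree H v) \<le> (n choose r) - ((n - t) choose r)"
      using assms(9) by (simp only: of_nat_le_iff[symmetric])
    moreover have "V - (V - U) = U" using UV by blast
    moreover have "card (V - U) \<le> n - t" using card_VU False by simp
    ultimately show ?thesis
      using \<open>card VF \<le> card (V - U)\<close>
        card_le_sum_degree_plus_ex[OF assms(1,2) Diff_subset _ _ assms(3) _ free]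
      by fastforce
  qed
qed

theorem lemma3p1:
  fixes n m r t :: nat and \<delta> :: real
    and VF :: "'b set" and F :: "'b set set"
    and V :: "'a set" and H :: "'a set set"
  assumes "2 \<le> r" and "r \<le> m" and "m \<le> n"
    and "0 \<le> \<delta>" and "\<delta> \<le> 1 / real m"
    and "rgraph r VF F" and "card VF = m" and "F \<noteq> {}"
    and "0 < t"
    and "real t \<le> \<delta> * real m * real n / real (r - 1) - real r"
    and "real t \<le> real n / real m"
    and "rgraph r V H" and "card V = n"
    and "\<not> has_disjoint_copies (t + 1) VF F V H"
    and "\<forall>v\<in>V. real (degree H v) \<le> (1 / real m - \<delta>) * real ((n - 1) choose (r - 1))"
  shows "card H \<le> (n choose r) - ((n - t) choose r) + ex r (n - t) VF F"
proof -
  define d where "d = (1 / real m - \<delta>) * real ((n - 1) choose (r - 1))"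
  have m: "0 < real m" using assms(1,2) by simp
  have "real t * real m \<le> real n" using assms(11) m by (simp add: field_simps)
  then have "t * m \<le> n" by (metis of_nat_le_iff of_nat_mult)
  moreover have "t \<le> t * m" using assms(1,2) by simp
  ultimately have "t \<le> n" by linarith
  have "\<delta> * real m \<le> 1" using assms(5) m by (simp add: field_simps)
  then have "(real t - 1) * (real r - 1) \<le> \<delta> * real m * (real n - 1)"
    using mult_diff_one_le_of_le_divide assms(1,10) by simp
  then have "real t * (1 - \<delta> * real m) * real ((n - 1) choose (r - 1))
      \<le> real ((n choose r) - ((n - t) choose r))"
    using choose_diff_lower_bound assms(1-3,9) \<open>t \<le> n\<close> by simp
  moreover have "1 - \<delta> * real m = real m * (1 / real m - \<delta>)" using m by (simp add: field_simps)
  ultimately have tmd: "real t * real m * d \<le> real ((n choose r) - ((n - t) choose r))"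
    unfolding d_def by (simp add: ac_simps)
  have "0 \<le> d" unfolding d_def using assms(5) by simp
  have deg: "\<forall>v\<in>V. degree H v \<le> d" using assms(15) unfolding d_def by blast
  show ?thesis
  proof (cases "(t + 1) * m \<le> n")
    case True
    show ?thesis
      by (rule card_le_via_disjoint_copies[OF assms(12,13,6,7) True assms(14) \<open>0 \<le> d\<close> deg tmd])
  next
    case False
    then have "real (card H) \<le> real t * real m * d"
      using card_le_of_few_vertices[OF assms(12,1,9) _ \<open>0 \<le> d\<close> deg] assms(13) by simp
    with tmd show ?thesis by linarith
  qed
qed

end
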